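(* There is an absolute constant $c>0$ such that for every compact connected subset $K$ of $\mathbb{D}$ and every $0<\varepsilon<1$: if $\operatorname{diam}_\rho K>1-\varepsilon$, then $\operatorname{Cap}(K)\ge c\log(1/\varepsilon)$. In particular, $\operatorname{Cap}(K)\to\infty$ as $\operatorname{diam}_\rho K\to1$.
   Context: Pseudo-hyperbolic distance: $\rho(z,w)=\left|\frac{z-w}{1-\bar zw}\right|$ for $z,w\in\mathbb{D}$; $\operatorname{diam}_\rho$ is the diameter for this metric. Green capacity: $g(z,w)=\log\left|\frac{1-\bar wz}{z-w}\right|$, $I(\mu)=\iint g\,d\mu\,d\mu$, $V(K)=\inf I(\mu)$ over probability measures supported by $K$, $\operatorname{Cap}(K)=1/V(K)$. *)

theory Defs
  imports "HOL-Probability.Probability"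
begin

definition unit_disc :: "complex set" where
  "unit_disc = ball 0 1"

definition pseudo_hyp :: "complex \<Rightarrow> complex \<Rightarrow> real" where
  "pseudo_hyp z w = cmod ((z - w) / (1 - cnj z * w))"

definition diam_rho :: "complex set \<Rightarrow> real" where
  "diam_rho K = (if K = {} then 0 else (SUP p\<in>K \<times> K. pseudo_hyp (fst p) (snd p)))"

definition green :: "complex \<Rightarrow> complex \<Rightarrow> ennreal" where
  "green z w = (if z = w then \<infinity>
     else ennreal (ln (cmod (1 - cnj w * z) / cmod (z - w))))"

definition green_energy :: "complex measure \<Rightarrow> ennreal" where
  "green_energy \<mu> = (\<integral>\<^sup>+ z. (\<integral>\<^sup>+ w. green z w \<partial>\<mu>) \<partial>\<mu>)"

definition prob_measures_on :: "complex set \<Rightarrow> complex measure set" where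
  "prob_measures_on K = {\<mu>. sets \<mu> = sets borel \<and> prob_space \<mu> \<and> emeasure \<mu> K = 1}"

definition green_V :: "complex set \<Rightarrow> ennreal" where
  "green_V K = (INF \<mu>\<in>prob_measures_on K. green_energy \<mu>)"

definition green_cap :: "complex set \<Rightarrow> ennreal" where
  "green_cap K = 1 / green_V K"

end

theory Submission
  imports Defs
begin

(* Pick p, q in K with rho(p,q) > 1 - eps and let psi(z) = log((1+rho(p,z))/(1-rho(p,z)))
   be the hyperbolic distance from p.  Along psi the disc looks like a line: by the reverse triangle
   inequality rho(z,w) >= tanh(|psi z - psi w|/2), hence the Green function satisfies
   g(z,w) <= k(psi z - psi w) with k(x) = log coth(|x|/2), an integrable kernel on the real line
   (its integral is at most 20).  Since K is connected and contains p and q, psi(K) contains the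
   interval [0,T] with T = psi(q) >= log(1/eps).  A Borel section f : [0,T] -> K of psi (the
   lexicographically smallest point of each fibre) transports the uniform probability measure on
   [0,T] to a probability measure mu on K, whose energy is at most the average of k(t - u) over
   [0,T]^2, i.e. at most 20/T. *)

lemma disc_defect_identity:
  "(cmod (1 - cnj z * w))\<^sup>2 - (cmod (z - w))\<^sup>2 = (1 - (cmod z)\<^sup>2) * (1 - (cmod w)\<^sup>2)"
  by (simp only: cmod_power2) (simp add: power2_eq_square algebra_simps)

lemma disc_denominator:
  assumes "cmod a < 1" "cmod z < 1"
  shows "cmod (1 - cnj a * z) \<ge> 1 - cmod a * cmod z"
    and "1 - cmod a * cmod z > 0"
    and "1 - cnj a * z \<noteq> 0"
proof -
  have "cmod (1::complex) - cmod (cnj a * z) \<le> cmod (1 - cnj a * z)" by (rule norm_triangle_ineq2)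
  then show lower: "cmod (1 - cnj a * z) \<ge> 1 - cmod a * cmod z" by (simp add: norm_mult)
  have "cmod a * cmod z < 1 * 1" using assms by (intro mult_strict_mono) auto
  then show pos: "1 - cmod a * cmod z > 0" by simp
  from lower pos show "1 - cnj a * z \<noteq> 0" by auto
qed

lemma pseudo_hyp_range:
  assumes "cmod a < 1" "cmod z < 1"
  shows "pseudo_hyp a z < 1" and "pseudo_hyp a z \<ge> 0"
proof -
  have den: "cmod (1 - cnj a * z) > 0" using disc_denominator[OF assms] by simp
  have "(cmod (1 - cnj a * z))\<^sup>2 - (cmod (a - z))\<^sup>2 > 0"
    unfolding disc_defect_identity using assms
    by (intro mult_pos_pos) (auto simp: abs_square_less_1)
  then have "cmod (a - z) < cmod (1 - cnj a * z)"
    using power2_less_imp_less den by fastforce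
  then show "pseudo_hyp a z < 1" using den by (simp add: pseudo_hyp_def norm_divide)
  show "pseudo_hyp a z \<ge> 0" by (simp add: pseudo_hyp_def)
qed

text \<open>The involutive disc automorphism exchanging \<open>a\<close> and \<open>0\<close>.\<close>
definition moebius :: "complex \<Rightarrow> complex \<Rightarrow> complex" where
  "moebius a z = (a - z) / (1 - cnj a * z)"

lemma norm_moebius: "cmod (moebius a z) = pseudo_hyp a z"
  by (simp add: moebius_def pseudo_hyp_def)

lemma pseudo_hyp_moebius:
  assumes a: "cmod a < 1" and z: "cmod z < 1" and w: "cmod w < 1"
  shows "pseudo_hyp (moebius a z) (moebius a w) = pseudo_hyp z w"
proof -
  have dz: "1 - cnj a * z \<noteq> 0" and dw: "1 - cnj a * w \<noteq> 0"
    using disc_denominator(3)[OF a z] disc_denominator(3)[OF a w] .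
  have dz': "1 - a * cnj z \<noteq> 0"
    using dz by (metis complex_cnj_cnj complex_cnj_diff complex_cnj_mult complex_cnj_one
        complex_cnj_zero_iff mult.commute)
  have da: "1 - a * cnj a \<noteq> 0" using disc_denominator(3)[OF a a] by (simp add: mult.commute)
  have numerator: "moebius a z - moebius a w =
      (1 - a * cnj a) * (w - z) / ((1 - cnj a * z) * (1 - cnj a * w))"
    unfolding moebius_def using dz dw by (simp add: field_simps)
  have clear: "(1 - X / P * (Y / Q)) * (P * Q) = P * Q - X * Y"
    if "P \<noteq> 0" "Q \<noteq> 0" for X Y P Q :: complex
    using that by (simp add: field_simps)
  have conj: "cnj (moebius a z) = (cnj a - cnj z) / (1 - a * cnj z)" by (simp add: moebius_def)
  have "(1 - cnj (moebius a z) * moebius a w) * ((1 - a * cnj z) * (1 - cnj a * w)) =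
      (1 - a * cnj a) * (1 - cnj z * w)"
    unfolding conj unfolding moebius_def clear[OF dz' dw] by (simp add: algebra_simps)
  then have denominator: "1 - cnj (moebius a z) * moebius a w =
      (1 - a * cnj a) * (1 - cnj z * w) / ((1 - a * cnj z) * (1 - cnj a * w))"
    using dz' dw by (simp add: eq_divide_eq)
  have conj_norm: "cmod (1 - a * cnj z) = cmod (1 - cnj a * z)"
    by (metis complex_cnj_cnj complex_cnj_diff complex_cnj_mult complex_cnj_one complex_mod_cnj
        mult.commute)
  show ?thesis
    unfolding pseudo_hyp_def numerator denominator norm_divide norm_mult conj_norm
    using da dw dz by (simp add: norm_minus_commute field_simps)
qed

lemma pseudo_hyp_ge_moduli:
  assumes u: "cmod u < 1" and v: "cmod v < 1"
  shows "pseudo_hyp u v \<ge> \<bar>cmod u - cmod v\<bar> / (1 - cmod u * cmod v)"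
proof -
  define r s D where "r = cmod u" and "s = cmod v" and "D = cmod (1 - cnj u * v)"
  have r: "0 \<le> r" "r < 1" and s: "0 \<le> s" "s < 1" using u v by (auto simp: r_def s_def)
  have D_ge: "D \<ge> 1 - r * s" and rs: "1 - r * s > 0"
    using disc_denominator[OF u v] by (auto simp: D_def r_def s_def)
  have D_pos: "D > 0" using D_ge rs by simp
  have num: "(cmod (u - v))\<^sup>2 = D\<^sup>2 - (1 - r\<^sup>2) * (1 - s\<^sup>2)"
    using disc_defect_identity[of u v] by (simp add: D_def r_def s_def)
  have rho: "pseudo_hyp u v = cmod (u - v) / D" by (simp add: pseudo_hyp_def D_def norm_divide)
  have rho_sq: "(pseudo_hyp u v)\<^sup>2 = 1 - (1 - r\<^sup>2) * (1 - s\<^sup>2) / D\<^sup>2"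
    unfolding rho power_divide num using D_pos by (simp add: field_simps)
  have "(1 - r * s)\<^sup>2 \<le> D\<^sup>2" using D_ge rs by (simp add: power_mono)
  moreover have "0 \<le> (1 - r\<^sup>2) * (1 - s\<^sup>2)" using r s by (simp add: abs_square_le_1)
  ultimately have "(1 - r\<^sup>2) * (1 - s\<^sup>2) / D\<^sup>2 \<le> (1 - r\<^sup>2) * (1 - s\<^sup>2) / (1 - r * s)\<^sup>2"
    using rs D_pos by (intro divide_left_mono) auto
  then have "(\<bar>r - s\<bar> / (1 - r * s))\<^sup>2 \<le> (pseudo_hyp u v)\<^sup>2"
    unfolding rho_sq using rs
    by (simp add: power_divide field_simps) (simp add: power2_eq_square algebra_simps)
  then show ?thesis unfolding r_def s_def
    by (rule power2_le_imp_le) (simp add: pseudo_hyp_def)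
qed

text \<open>Reverse triangle inequality for \<open>\<rho>\<close>, obtained by moving \<open>p\<close> to the origin.\<close>
lemma pseudo_hyp_reverse_triangle:
  assumes p: "cmod p < 1" and z: "cmod z < 1" and w: "cmod w < 1"
  shows "pseudo_hyp z w \<ge>
    \<bar>pseudo_hyp p z - pseudo_hyp p w\<bar> / (1 - pseudo_hyp p z * pseudo_hyp p w)"
proof -
  have "cmod (moebius p z) < 1" "cmod (moebius p w) < 1"
    using pseudo_hyp_range[OF p z] pseudo_hyp_range[OF p w] by (auto simp: norm_moebius)
  from pseudo_hyp_ge_moduli[OF this] show ?thesis
    by (simp add: pseudo_hyp_moebius[OF p z w] norm_moebius)
qed

definition hyp_dist :: "complex \<Rightarrow> complex \<Rightarrow> real" where
  "hyp_dist p z = ln ((1 + pseudo_hyp p z) / (1 - pseudo_hyp p z))"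

text \<open>\<open>tanh_half y = tanh (y/2)\<close>; it inverts \<open>hyp_dist\<close>, i.e. \<open>\<rho> = tanh_half (hyperbolic distance)\<close>.\<close>
definition tanh_half :: "real \<Rightarrow> real" where
  "tanh_half y = (exp y - 1) / (exp y + 1)"

text \<open>The addition law of \<open>tanh\<close> in the form needed for the reverse triangle inequality:
  for \<open>0 \<le> s, r < 1\<close>, \<open>|r - s| / (1 - rs) = tanh(|artanh r - artanh s|)\<close>.\<close>
lemma tanh_half_difference:
  assumes "0 \<le> s" "s \<le> r" "r < 1"
  shows "(r - s) / (1 - r * s) = tanh_half (ln ((1 + r) / (1 - r)) - ln ((1 + s) / (1 - s)))"
proof -
  define A B where "A = (1 + r) / (1 - r)" and "B = (1 + s) / (1 - s)"
  have A: "A > 0" and B: "B > 0" and n: "1 - r \<noteq> 0" "1 - s \<noteq> 0"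
    using assms by (auto simp: A_def B_def)
  have "tanh_half (ln A - ln B) = (A / B - 1) / (A / B + 1)"
    using A B by (simp add: tanh_half_def exp_diff)
  also have "\<dots> = (A - B) / (A + B)"
  proof -
    have "A * B + B * B > 0" "A + B > 0" using A B by (auto intro: add_pos_pos)
    then show ?thesis using B by (simp add: field_simps)
  qed
  also have "A - B = 2 * (r - s) / ((1 - r) * (1 - s))"
    unfolding A_def B_def using n by (simp add: field_simps)
  also have "A + B = 2 * (1 - r * s) / ((1 - r) * (1 - s))"
    unfolding A_def B_def using n by (simp add: field_simps)
  also have "(2 * (r - s) / ((1 - r) * (1 - s))) / (2 * (1 - r * s) / ((1 - r) * (1 - s))) =
      (2 * (r - s)) / (2 * (1 - r * s))"
  proof -
    have cancel: "(X / c) / (Y / c) = X / Y" if "c \<noteq> 0" for X Y c :: real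
      using that by (simp add: field_simps)
    show ?thesis using n by (intro cancel) simp
  qed
  also have "\<dots> = (r - s) / (1 - r * s)"
    by (rule mult_divide_mult_cancel_left) simp
  finally show ?thesis by (simp add: A_def B_def)
qed

lemma tanh_half_abs_difference:
  assumes "0 \<le> s" "s < 1" "0 \<le> r" "r < 1"
  shows "\<bar>r - s\<bar> / (1 - r * s) = tanh_half \<bar>ln ((1 + r) / (1 - r)) - ln ((1 + s) / (1 - s))\<bar>"
proof (cases "s \<le> r")
  case True
  have "ln ((1 + s) / (1 - s)) \<le> ln ((1 + r) / (1 - r))" using assms True
    by (subst ln_le_cancel_iff) (auto simp: field_simps)
  then show ?thesis using tanh_half_difference[of s r] assms True by simp
next
  case False
  have "ln ((1 + r) / (1 - r)) \<le> ln ((1 + s) / (1 - s))" using assms False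
    by (subst ln_le_cancel_iff) (auto simp: field_simps)
  then show ?thesis
    using tanh_half_difference[of r s] assms False by (simp add: mult.commute abs_minus_commute)
qed

lemma tanh_half_hyp_dist_le:
  assumes p: "cmod p < 1" and z: "cmod z < 1" and w: "cmod w < 1"
  shows "tanh_half \<bar>hyp_dist p z - hyp_dist p w\<bar> \<le> pseudo_hyp z w"
  using pseudo_hyp_reverse_triangle[OF p z w]
    tanh_half_abs_difference[of "pseudo_hyp p w" "pseudo_hyp p z"]
    pseudo_hyp_range[OF p z] pseudo_hyp_range[OF p w]
  by (simp add: hyp_dist_def)

lemma tanh_half_pos:
  assumes "y > 0" shows "tanh_half y > 0"
proof -
  have "exp y > 1" using assms by simp
  then have "exp y - 1 > 0" "exp y + 1 > 0" by linarith+
  then show ?thesis by (simp add: tanh_half_def)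
qed

text \<open>The kernel \<open>log coth(|x|/2)\<close>, equal to \<open>+\<infinity>\<close> at \<open>0\<close>; it is the Green function evaluated at two
  points at hyperbolic distance \<open>|x|\<close>.\<close>
definition log_coth_half :: "real \<Rightarrow> ennreal" where
  "log_coth_half x =
     (if x = 0 then \<infinity> else ennreal (ln ((exp \<bar>x\<bar> + 1) / (exp \<bar>x\<bar> - 1))))"

text \<open>Comparing with a geodesic through \<open>p\<close>: \<open>g(z,w) \<le> log coth(|d(p,z) - d(p,w)|/2)\<close>.\<close>
lemma green_le_log_coth_half:
  assumes p: "cmod p < 1" and z: "cmod z < 1" and w: "cmod w < 1"
  shows "green z w \<le> log_coth_half (hyp_dist p z - hyp_dist p w)"
proof (cases "z = w \<or> hyp_dist p z - hyp_dist p w = 0")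
  case True
  then show ?thesis by (auto simp: log_coth_half_def green_def)
next
  case False
  define x where "x = \<bar>hyp_dist p z - hyp_dist p w\<bar>"
  have x: "x > 0" using False by (auto simp: x_def)
  have tanh: "tanh_half x \<le> pseudo_hyp z w" "tanh_half x > 0"
    using tanh_half_hyp_dist_le[OF p z w] tanh_half_pos[OF x] by (auto simp: x_def)
  have "cmod (1 - cnj w * z) = cmod (1 - cnj z * w)"
    by (metis complex_cnj_cnj complex_cnj_diff complex_cnj_mult complex_cnj_one complex_mod_cnj
        mult.commute)
  then have green: "cmod (1 - cnj w * z) / cmod (z - w) = 1 / pseudo_hyp z w"
    by (simp add: pseudo_hyp_def norm_divide)
  have "ln (1 / pseudo_hyp z w) \<le> ln (1 / tanh_half x)"
    using tanh by (subst ln_le_cancel_iff) (auto simp: divide_simps)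
  also have "1 / tanh_half x = (exp x + 1) / (exp x - 1)" by (simp add: tanh_half_def)
  finally show ?thesis
    using False by (auto simp: log_coth_half_def green_def green x_def intro!: ennreal_leI)
qed

lemma ln_one_plus_le_two_sqrt:
  assumes "(v::real) \<ge> 0" shows "ln (1 + v) \<le> 2 * sqrt v"
proof -
  have "ln (1 + v) = 2 * ln (sqrt (1 + v))" using assms by (simp add: ln_sqrt)
  also have "\<dots> \<le> 2 * (sqrt (1 + v) - 1)" using ln_le_minus_one[of "sqrt (1 + v)"] assms by simp
  also have "sqrt (1 + v) \<le> sqrt 1 + sqrt v" using assms by (intro sqrt_add_le_add_sqrt) auto
  then have "2 * (sqrt (1 + v) - 1) \<le> 2 * sqrt v" by simp
  finally show ?thesis .
qed

lemma coth_half_eq: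
  assumes "(y::real) > 0" shows "(exp y + 1) / (exp y - 1) = 1 + 2 / (exp y - 1)"
proof -
  have "exp y - 1 > 0" using assms by simp
  then show ?thesis by (simp add: field_simps)
qed

text \<open>Near \<open>0\<close> the kernel has an integrable singularity: \<open>log coth(y/2) \<le> 3 y^(-1/2)\<close>.\<close>
lemma log_coth_half_le_near_zero:
  assumes y: "(y::real) > 0"
  shows "ln ((exp y + 1) / (exp y - 1)) \<le> 3 * y powr (-(1/2))"
proof -
  have e: "exp y - 1 \<ge> y" using exp_ge_add_one_self[of y] by linarith
  have ep: "exp y - 1 > 0" using e y by linarith
  then have v0: "2 / (exp y - 1) \<ge> 0" by simp
  have v: "2 / (exp y - 1) \<le> 2 / y" by (rule divide_left_mono[OF e]) (use ep y in auto)
  have "ln ((exp y + 1) / (exp y - 1)) \<le> 2 * sqrt (2 / (exp y - 1))"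
    unfolding coth_half_eq[OF y] by (rule ln_one_plus_le_two_sqrt[OF v0])
  also have "\<dots> \<le> 2 * sqrt (2 / y)" using v by simp
  also have "\<dots> = (2 * sqrt 2) * y powr (-(1/2))"
  proof -
    have "y powr (-(1/2)) = inverse (y powr (1/2))" by (rule powr_minus)
    also have "\<dots> = inverse (sqrt y)" using y by (simp only: powr_half_sqrt less_imp_le)
    finally have h: "y powr (-(1/2)) = inverse (sqrt y)" .
    show ?thesis unfolding h real_sqrt_divide by (simp add: divide_inverse)
  qed
  also have "\<dots> \<le> 3 * y powr (-(1/2))"
  proof (rule mult_right_mono)
    have "(sqrt 2)\<^sup>2 \<le> (3/2::real)\<^sup>2" by (simp add: power2_eq_square)
    then have "sqrt 2 \<le> 3/2" by (rule power2_le_imp_le) simp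
    then show "2 * sqrt 2 \<le> (3::real)" by simp
  qed simp
  finally show ?thesis .
qed

text \<open>At infinity the kernel decays like \<open>2 e^(-y)\<close>; we only need \<open>\<le> 4 y^(-2)\<close>.\<close>
lemma log_coth_half_le_at_infinity:
  assumes y: "(y::real) \<ge> 1"
  shows "ln ((exp y + 1) / (exp y - 1)) \<le> 4 * y powr (-2)"
proof -
  have yp: "y > 0" using y by simp
  have e: "exp y - 1 \<ge> y\<^sup>2 / 2" using exp_lower_Taylor_quadratic[of y] yp by linarith
  have y2: "y\<^sup>2 / 2 > 0" using yp by simp
  have ep: "exp y - 1 > 0" using e y2 by linarith
  have "ln ((exp y + 1) / (exp y - 1)) \<le> 2 / (exp y - 1)"
    unfolding coth_half_eq[OF yp] by (rule ln_add_one_self_le_self) (use ep in simp)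
  also have "\<dots> \<le> 2 / (y\<^sup>2 / 2)"
    by (rule divide_left_mono[OF e _ mult_pos_pos[OF ep y2]]) simp
  also have "\<dots> = 4 * y powr (-2)"
  proof -
    have "y powr (-2) = inverse (y powr 2)" by (rule powr_minus)
    then have "y powr (-2) = inverse (y\<^sup>2)" using yp by simp
    moreover have "2 / (y\<^sup>2 / 2) = 4 / y\<^sup>2" using yp by (simp add: field_simps)
    ultimately show ?thesis by (simp only: divide_inverse)
  qed
  finally show ?thesis .
qed

definition coth_profile :: "real \<Rightarrow> ennreal" where
  "coth_profile y = ennreal (3 * y powr (-(1/2))) * indicator {0..1} y
     + ennreal (4 * y powr (-2)) * indicator {1..} y"

lemma coth_profile_measurable [measurable]: "coth_profile \<in> borel_measurable borel"
  unfolding coth_profile_def by measurable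

lemma log_coth_half_measurable [measurable]: "log_coth_half \<in> borel_measurable borel"
  unfolding log_coth_half_def by measurable

lemma log_coth_half_le_profile:
  assumes "x \<noteq> 0" shows "log_coth_half x \<le> coth_profile \<bar>x\<bar>"
proof -
  define y where "y = \<bar>x\<bar>"
  have y: "y > 0" using assms by (simp add: y_def)
  have k: "log_coth_half x = ennreal (ln ((exp y + 1) / (exp y - 1)))"
    using assms by (simp add: log_coth_half_def y_def)
  show ?thesis
  proof (cases "y \<le> 1")
    case True
    have "log_coth_half x \<le> ennreal (3 * y powr (-(1/2))) * indicator {0..1} y"
      unfolding k using True y log_coth_half_le_near_zero[OF y] by (auto intro: ennreal_leI)
    also have "\<dots> \<le> coth_profile y" unfolding coth_profile_def by simp
    finally show ?thesis by (simp add: y_def)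
  next
    case False
    have "log_coth_half x \<le> ennreal (4 * y powr (-2)) * indicator {1..} y"
      unfolding k using False y log_coth_half_le_at_infinity[of y] by (auto intro: ennreal_leI)
    also have "\<dots> \<le> coth_profile y" unfolding coth_profile_def by simp
    finally show ?thesis by (simp add: y_def)
  qed
qed

lemma coth_profile_integral: "(\<integral>\<^sup>+y. coth_profile y \<partial>lborel) = 10"
proof -
  have "((\<lambda>y::real. 3 * y powr (-(1/2))) has_integral 3 * (1 powr (-(1/2) + 1) / (-(1/2) + 1))) {0..1}"
    by (intro has_integral_mult_right has_integral_powr_from_0) auto
  then have near_zero: "(\<integral>\<^sup>+y. ennreal (3 * y powr (-(1/2))) * indicator {0..1} y \<partial>lborel) = 6"
    by (subst nn_integral_has_integral_lebesgue') auto
  have "((\<lambda>y::real. 4 * y powr (-2)) has_integral 4 * (-(1 powr (-2 + 1)) / (-2 + 1))) {1..}"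
    by (intro has_integral_mult_right has_integral_powr_to_inf) auto
  then have at_infinity: "(\<integral>\<^sup>+y. ennreal (4 * y powr (-2)) * indicator {1..} y \<partial>lborel) = 4"
    by (subst nn_integral_has_integral_lebesgue') auto
  show ?thesis
    unfolding coth_profile_def using near_zero at_infinity by (subst nn_integral_add) auto
qed

text \<open>The kernel is integrable on the line: \<open>\<integral> log coth(|x|/2) dx \<le> 20\<close>
  (the exact value is \<open>\<pi>\<^sup>2/2\<close>).\<close>
lemma log_coth_half_integral: "(\<integral>\<^sup>+x. log_coth_half x \<partial>lborel) \<le> 20"
proof -
  have "(\<integral>\<^sup>+x. log_coth_half x \<partial>lborel) \<le> (\<integral>\<^sup>+x. coth_profile x + coth_profile (- x) \<partial>lborel)"
  proof (rule nn_integral_mono_AE)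
    show "AE x in lborel. log_coth_half x \<le> coth_profile x + coth_profile (- x)"
      using AE_lborel_singleton[of 0]
    proof eventually_elim
      case (elim x)
      have "coth_profile \<bar>x\<bar> \<le> coth_profile x + coth_profile (- x)"
        by (cases "x \<ge> 0") (auto simp: add_increasing add_increasing2)
      with log_coth_half_le_profile[OF elim] show ?case by (rule order_trans)
    qed
  qed
  also have "\<dots> = (\<integral>\<^sup>+x. coth_profile x \<partial>lborel) + (\<integral>\<^sup>+x. coth_profile (- x) \<partial>lborel)"
    by (rule nn_integral_add) auto
  also have "(\<integral>\<^sup>+x. coth_profile (- x) \<partial>lborel) = (\<integral>\<^sup>+x. coth_profile x \<partial>lborel)"
    using nn_integral_real_affine[OF coth_profile_measurable, of "-1" 0] by simp
  finally show ?thesis by (simp add: coth_profile_integral)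
qed

text \<open>Used twice, it selects
  the lexicographically smallest point of a fibre.\<close>
definition fiber_min :: "'a set \<Rightarrow> ('a \<Rightarrow> real) \<Rightarrow> ('a \<Rightarrow> 'b) \<Rightarrow> 'b \<Rightarrow> real" where
  "fiber_min C \<phi> \<psi> t = (if t \<in> \<psi> ` C then Inf (\<phi> ` {z\<in>C. \<psi> z = t}) else 0)"

lemma compact_closed_restriction:
  assumes "compact C" and "closed {z\<in>C. P z}"
  shows "compact {z\<in>C. P z}"
proof -
  have "compact (C \<inter> {z\<in>C. P z})" using assms by (rule compact_Int_closed)
  then show ?thesis by (simp add: Int_absorb1)
qed

lemma fiber_min_attained:
  fixes \<psi> :: "'a::t2_space \<Rightarrow> 'b::t2_space"
  assumes C: "compact C" and \<phi>: "continuous_on C \<phi>" and \<psi>: "continuous_on C \<psi>" and t: "t \<in> \<psi> ` C"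
  shows "\<exists>z\<in>C. \<psi> z = t \<and> \<phi> z = fiber_min C \<phi> \<psi> t"
    and "z \<in> C \<Longrightarrow> \<psi> z = t \<Longrightarrow> fiber_min C \<phi> \<psi> t \<le> \<phi> z"
proof -
  let ?F = "{z\<in>C. \<psi> z = t}"
  have "closed ?F"
    using continuous_closed_preimage_constant[OF \<psi> compact_imp_closed[OF C]] .
  then have "compact ?F" by (rule compact_closed_restriction[OF C])
  then have compact_values: "compact (\<phi> ` ?F)"
    by (rule compact_continuous_image[OF continuous_on_subset[OF \<phi>], rotated]) auto
  have bdd: "bdd_below (\<phi> ` ?F)"
    using compact_values by (intro bounded_imp_bdd_below compact_imp_bounded)
  have ne: "\<phi> ` ?F \<noteq> {}" using t by auto
  have eq: "fiber_min C \<phi> \<psi> t = Inf (\<phi> ` ?F)" using t by (simp add: fiber_min_def)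
  have "Inf (\<phi> ` ?F) \<in> \<phi> ` ?F"
    using closed_contains_Inf[OF ne bdd compact_imp_closed[OF compact_values]] .
  then show "\<exists>z\<in>C. \<psi> z = t \<and> \<phi> z = fiber_min C \<phi> \<psi> t" unfolding eq by force
  show "z \<in> C \<Longrightarrow> \<psi> z = t \<Longrightarrow> fiber_min C \<phi> \<psi> t \<le> \<phi> z"
    unfolding eq using bdd by (auto intro: cInf_lower)
qed

text \<open>The fibre minimum is attained, and as a function of the fibre it is Borel measurable: its
  sublevel sets are images of compact sets, up to the complement of \<open>\<psi>(C)\<close>.\<close>
lemma fiber_min_measurable:
  fixes \<psi> :: "'a::t2_space \<Rightarrow> 'b::t2_space"
  assumes C: "compact C" and \<phi>: "continuous_on C \<phi>" and \<psi>: "continuous_on C \<psi>"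
  shows "fiber_min C \<phi> \<psi> \<in> borel_measurable borel"
proof (subst borel_measurable_iff_le, intro allI)
  fix a :: real
  let ?below = "{z\<in>C. \<phi> z \<le> a}"
  have eq: "{t \<in> space borel. fiber_min C \<phi> \<psi> t \<le> a} =
      \<psi> ` ?below \<union> (if 0 \<le> a then - (\<psi> ` C) else {})"
  proof (intro set_eqI iffI)
    fix t assume t: "t \<in> {t \<in> space borel. fiber_min C \<phi> \<psi> t \<le> a}"
    show "t \<in> \<psi> ` ?below \<union> (if 0 \<le> a then - (\<psi> ` C) else {})"
    proof (cases "t \<in> \<psi> ` C")
      case True
      then obtain z where "z \<in> C" "\<psi> z = t" "\<phi> z = fiber_min C \<phi> \<psi> t"
        using fiber_min_attained(1)[OF C \<phi> \<psi>] by blast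
      with t show ?thesis by auto
    qed (use t in \<open>auto simp: fiber_min_def\<close>)
  next
    fix t assume "t \<in> \<psi> ` ?below \<union> (if 0 \<le> a then - (\<psi> ` C) else {})"
    then show "t \<in> {t \<in> space borel. fiber_min C \<phi> \<psi> t \<le> a}"
      using fiber_min_attained(2)[OF C \<phi> \<psi>] by (force simp: fiber_min_def split: if_splits)
  qed
  have "closed ?below"
    using continuous_closed_preimage[OF \<phi> compact_imp_closed[OF C] closed_atMost, of a]
    by (simp add: Int_def vimage_def)
  then have "compact (\<psi> ` ?below)"
    by (intro compact_continuous_image continuous_on_subset[OF \<psi>] compact_closed_restriction[OF C]) auto
  moreover have "compact (\<psi> ` C)" using compact_continuous_image[OF \<psi> C] .
  ultimately show "{t \<in> space borel. fiber_min C \<phi> \<psi> t \<le> a} \<in> sets borel"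
    unfolding eq by (auto intro: borel_closed borel_open compact_imp_closed)
qed

text \<open>A Borel section of a continuous real function on a compact subset of \<open>\<complex>\<close>: minimise \<open>Re\<close>
  over the fibre, then \<open>Im\<close> over the fibre of \<open>z \<mapsto> (\<psi> z, Re z)\<close>.\<close>
lemma measurable_section:
  fixes \<psi> :: "complex \<Rightarrow> real"
  assumes K: "compact K" and \<psi>: "continuous_on K \<psi>"
  obtains f where "f \<in> borel_measurable borel" and "\<And>t. t \<in> \<psi> ` K \<Longrightarrow> f t \<in> K \<and> \<psi> (f t) = t"
proof
  define m where "m = fiber_min K Re \<psi>"
  define g where "g = fiber_min K Im (\<lambda>z. (\<psi> z, Re z))"
  have Re: "continuous_on K Re" and Im: "continuous_on K Im"
    using continuous_on_Re[OF continuous_on_id] continuous_on_Im[OF continuous_on_id] by simp_all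
  have \<psi>Re: "continuous_on K (\<lambda>z. (\<psi> z, Re z))" by (intro continuous_intros \<psi>)
  have [measurable]: "m \<in> borel_measurable borel"
    unfolding m_def by (rule fiber_min_measurable[OF K Re \<psi>])
  have [measurable]: "g \<in> borel_measurable borel"
    unfolding g_def by (rule fiber_min_measurable[OF K Im \<psi>Re])
  show "(\<lambda>t. Complex (m t) (g (t, m t))) \<in> borel_measurable borel"
    unfolding Complex_eq by measurable
  fix t assume t: "t \<in> \<psi> ` K"
  obtain z0 where z0: "z0 \<in> K" "\<psi> z0 = t" "Re z0 = m t"
    using fiber_min_attained(1)[OF K Re \<psi> t] unfolding m_def by blast
  then have "(t, m t) \<in> (\<lambda>z. (\<psi> z, Re z)) ` K" by force
  from fiber_min_attained(1)[OF K Im \<psi>Re this] obtain z1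
    where "z1 \<in> K" "\<psi> z1 = t" "Re z1 = m t" "Im z1 = g (t, m t)"
    unfolding g_def by auto
  moreover have "z1 = Complex (m t) (g (t, m t))" using calculation by (simp add: complex_eq_iff)
  ultimately show "Complex (m t) (g (t, m t)) \<in> K \<and> \<psi> (Complex (m t) (g (t, m t))) = t" by simp
qed

definition uniform_pushforward :: "real \<Rightarrow> (real \<Rightarrow> 'a::topological_space) \<Rightarrow> 'a measure" where
  "uniform_pushforward T f = distr (uniform_measure lborel {0..T}) borel f"

lemma uniform_interval_prob_space:
  assumes "T > 0" shows "prob_space (uniform_measure lborel {0..T::real})"
  using assms by (intro prob_space_uniform_measure) auto

lemma measurable_uniform_interval:
  "f \<in> borel_measurable borel \<Longrightarrow> f \<in> measurable (uniform_measure lborel {0..T::real}) borel"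
  by (subst measurable_cong_sets[of _ borel]) auto

lemma uniform_pushforward_prob_measures_on:
  fixes f :: "real \<Rightarrow> complex"
  assumes T: "T > 0" and f: "f \<in> borel_measurable borel" and K: "closed K"
    and into: "\<And>t. t \<in> {0..T} \<Longrightarrow> f t \<in> K"
  shows "uniform_pushforward T f \<in> prob_measures_on K"
proof -
  let ?U = "uniform_measure lborel {0..T}"
  have fU: "f \<in> measurable ?U borel" using f by (rule measurable_uniform_interval)
  have K_borel: "K \<in> sets borel" using K by (rule borel_closed)
  have "emeasure (uniform_pushforward T f) K = emeasure ?U (f -` K \<inter> space ?U)"
    unfolding uniform_pushforward_def by (rule emeasure_distr[OF fU K_borel])
  also have "\<dots> = emeasure lborel ({0..T} \<inter> f -` K) / emeasure lborel {0..T}"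
    using measurable_sets[OF f K_borel] by simp
  also have "{0..T} \<inter> f -` K = {0..T}" using into by auto
  also have "emeasure lborel {0..T} / emeasure lborel {0..T} = 1" using T by simp
  finally show ?thesis
    using prob_space.prob_space_distr[OF uniform_interval_prob_space[OF T] fU]
    by (simp add: prob_measures_on_def uniform_pushforward_def)
qed

lemma uniform_average_translate:
  assumes T: "T > 0" and k [measurable]: "k \<in> borel_measurable borel"
    and k_int: "(\<integral>\<^sup>+x. k x \<partial>lborel) \<le> ennreal M"
  shows "(\<integral>\<^sup>+u. k (t - u) \<partial>uniform_measure lborel {0..T}) \<le> ennreal M / ennreal T"
proof -
  have "(\<integral>\<^sup>+u. k (t - u) \<partial>uniform_measure lborel {0..T}) =
      (\<integral>\<^sup>+u. k (t - u) * indicator {0..T} u \<partial>lborel) / emeasure lborel {0..T}"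
    by (rule nn_integral_uniform_measure) auto
  also have "\<dots> \<le> (\<integral>\<^sup>+u. k (t - u) \<partial>lborel) / ennreal T"
    using T by (simp add: divide_right_mono_ennreal nn_integral_mono indicator_def)
  also have "(\<integral>\<^sup>+u. k (t - u) \<partial>lborel) = (\<integral>\<^sup>+x. k x \<partial>lborel)"
    using nn_integral_real_affine[OF k, of "-1" t] by simp
  also have "(\<integral>\<^sup>+x. k x \<partial>lborel) / ennreal T \<le> ennreal M / ennreal T"
    using k_int by (rule divide_right_mono_ennreal)
  finally show ?thesis .
qed

lemma energy_uniform_pushforward:
  fixes G :: "'a::topological_space \<Rightarrow> 'a \<Rightarrow> ennreal" and f :: "real \<Rightarrow> 'a"
  assumes G [measurable]: "(\<lambda>(z, w). G z w) \<in> borel_measurable (borel \<Otimes>\<^sub>M borel)"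
    and T: "T > 0" and f [measurable]: "f \<in> borel_measurable borel"
    and k: "k \<in> borel_measurable borel" and k_int: "(\<integral>\<^sup>+x. k x \<partial>lborel) \<le> ennreal M"
    and G_le: "\<And>t u. t \<in> {0..T} \<Longrightarrow> u \<in> {0..T} \<Longrightarrow> G (f t) (f u) \<le> k (t - u)"
  shows "(\<integral>\<^sup>+z. (\<integral>\<^sup>+w. G z w \<partial>uniform_pushforward T f) \<partial>uniform_pushforward T f)
    \<le> ennreal M / ennreal T"
proof -
  define U where "U = uniform_measure lborel {0..T}"
  define \<mu> where "\<mu> = uniform_pushforward T f"
  have fU: "f \<in> measurable U borel" unfolding U_def by (rule measurable_uniform_interval[OF f])
  have \<mu>: "\<mu> = distr U borel f" by (simp add: \<mu>_def U_def uniform_pushforward_def)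
  have U_prob: "prob_space U" unfolding U_def by (rule uniform_interval_prob_space[OF T])
  have in_interval: "AE t in U. t \<in> {0..T}" unfolding U_def by (rule AE_uniform_measureI) auto
  have G_section [measurable]: "(\<lambda>w. G z w) \<in> borel_measurable borel" for z
    using measurable_Pair2[OF G, of z] by simp
  have "(\<lambda>z. \<integral>\<^sup>+w. G z w \<partial>\<mu>) \<in> borel_measurable borel"
  proof -
    have "sigma_finite_measure \<mu>"
      unfolding \<mu> by (intro prob_space_imp_sigma_finite prob_space.prob_space_distr U_prob fU)
    moreover have "(\<lambda>(z, w). G z w) \<in> borel_measurable (borel \<Otimes>\<^sub>M \<mu>)"
      by (subst measurable_cong_sets[OF sets_pair_measure_cong[OF refl] refl]) (auto simp: \<mu>)
    ultimately show ?thesis by (rule sigma_finite_measure.borel_measurable_nn_integral)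
  qed
  then have "(\<integral>\<^sup>+z. (\<integral>\<^sup>+w. G z w \<partial>\<mu>) \<partial>\<mu>) = (\<integral>\<^sup>+t. (\<integral>\<^sup>+u. G (f t) (f u) \<partial>U) \<partial>U)"
    unfolding \<mu> by (simp add: nn_integral_distr[OF fU])
  also have "\<dots> \<le> (\<integral>\<^sup>+t. ennreal M / ennreal T \<partial>U)"
  proof (rule nn_integral_mono_AE)
    show "AE t in U. (\<integral>\<^sup>+u. G (f t) (f u) \<partial>U) \<le> ennreal M / ennreal T"
      using in_interval
    proof eventually_elim
      case (elim t)
      then have t: "t \<in> {0..T}" .
      have "AE u in U. G (f t) (f u) \<le> k (t - u)"
        using in_interval by eventually_elim (rule G_le[OF t])
      then have "(\<integral>\<^sup>+u. G (f t) (f u) \<partial>U) \<le> (\<integral>\<^sup>+u. k (t - u) \<partial>U)"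
        by (rule nn_integral_mono_AE)
      also have "\<dots> \<le> ennreal M / ennreal T"
        unfolding U_def by (rule uniform_average_translate[OF T k k_int])
      finally show ?case .
    qed
  qed
  also have "\<dots> = ennreal M / ennreal T"
    using prob_space.emeasure_space_1[OF U_prob] by simp
  finally show ?thesis unfolding \<mu>_def .
qed

text \<open>The Green function is jointly Borel measurable (it is continuous off the closed diagonal).\<close>
lemma green_measurable [measurable]:
  "(\<lambda>(z, w). green z w) \<in> borel_measurable (borel \<Otimes>\<^sub>M borel)"
proof -
  have diagonal: "closed {x::complex \<times> complex. fst x = snd x}"
    by (intro closed_Collect_eq continuous_intros)
  have coordinates: "(\<lambda>x::complex \<times> complex. fst x) \<in> borel_measurable borel"
      "(\<lambda>x::complex \<times> complex. snd x) \<in> borel_measurable borel"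
      "(\<lambda>x::complex \<times> complex. cnj (snd x)) \<in> borel_measurable borel"
    by (intro borel_measurable_continuous_onI continuous_intros)+
  have "(\<lambda>x::complex \<times> complex. if x \<in> {x. fst x = snd x} then \<infinity>
      else ennreal (ln (cmod (1 - cnj (snd x) * fst x) / cmod (fst x - snd x))))
      \<in> borel_measurable borel"
    using diagonal coordinates by (intro measurable_If_set) (measurable, auto intro: borel_closed)
  then have "(\<lambda>x::complex \<times> complex. green (fst x) (snd x)) \<in> borel_measurable borel"
    unfolding green_def by simp
  then show ?thesis unfolding borel_prod by (simp add: case_prod_beta')
qed

lemma green_cap_ge_of_energy:
  assumes \<mu>: "\<mu> \<in> prob_measures_on K" and energy: "green_energy \<mu> \<le> ennreal M / ennreal T"
    and M: "M > 0" and T: "T > 0"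
  shows "ennreal (T / M) \<le> green_cap K"
proof (cases "green_V K = 0")
  case True
  then show ?thesis by (simp add: green_cap_def)
next
  case False
  have V: "green_V K \<le> ennreal (M / T)"
    using INF_lower[OF \<mu>, of green_energy] energy M T
    by (simp add: green_V_def divide_ennreal)
  then obtain v where v: "green_V K = ennreal v" "0 \<le> v"
    by (cases "green_V K") (auto simp: top_unique)
  have v_pos: "0 < v" and v_le: "v \<le> M / T" using v False V M T by (auto simp: ennreal_le_iff)
  then have "T / M \<le> 1 / v" using M T by (simp add: field_simps)
  then have "ennreal (T / M) \<le> ennreal (1 / v)" by (rule ennreal_leI)
  also have "ennreal (1 / v) = green_cap K"
    using v v_pos by (simp add: green_cap_def divide_ennreal[symmetric])
  finally show ?thesis .
qed

lemma diam_rho_witness: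
  assumes K: "K \<subseteq> unit_disc" and r: "0 \<le> r" and diam: "diam_rho K > r"
  obtains p q where "p \<in> K" "q \<in> K" "pseudo_hyp p q > r"
proof -
  have nonempty: "K \<noteq> {}" using diam r by (auto simp: diam_rho_def)
  have "bdd_above ((\<lambda>x. pseudo_hyp (fst x) (snd x)) ` (K \<times> K))"
    using K pseudo_hyp_range(1) by (intro bdd_aboveI2[of _ _ 1])
      (force simp: unit_disc_def less_imp_le)
  then have "\<exists>x\<in>K \<times> K. r < pseudo_hyp (fst x) (snd x)"
    using diam nonempty by (simp add: diam_rho_def less_cSUP_iff)
  then show ?thesis using that by auto
qed

lemma hyp_dist_self: "hyp_dist p p = 0"
  by (simp add: hyp_dist_def pseudo_hyp_def)

lemma hyp_dist_continuous:
  assumes p: "cmod p < 1" and K: "K \<subseteq> unit_disc"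
  shows "continuous_on K (hyp_dist p)"
proof -
  have disc: "cmod z < 1" if "z \<in> K" for z using K that by (auto simp: unit_disc_def)
  have "continuous_on K (pseudo_hyp p)"
    unfolding pseudo_hyp_def using disc_denominator(3)[OF p disc]
    by (intro continuous_intros) auto
  moreover have "\<forall>z\<in>K. 0 \<le> pseudo_hyp p z \<and> pseudo_hyp p z < 1"
    using pseudo_hyp_range[OF p disc] by auto
  ultimately show ?thesis
    unfolding hyp_dist_def by (intro continuous_intros) (fastforce simp: field_simps)+
qed

lemma hyp_dist_ge_ln:
  assumes p: "cmod p < 1" and q: "cmod q < 1" and \<epsilon>: "0 < \<epsilon>"
    and far: "1 - \<epsilon> < pseudo_hyp p q"
  shows "ln (1 / \<epsilon>) \<le> hyp_dist p q"
proof -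
  define \<rho> where "\<rho> = pseudo_hyp p q"
  have \<rho>: "1 - \<epsilon> < \<rho>" "\<rho> < 1" "0 \<le> \<rho>" using far pseudo_hyp_range[OF p q] by (auto simp: \<rho>_def)
  have "0 \<le> \<epsilon> * \<rho>" using \<rho> \<epsilon> by simp
  moreover have "\<epsilon> * (1 + \<rho>) = \<epsilon> + \<epsilon> * \<rho>" by (simp add: algebra_simps)
  ultimately have "1 - \<rho> \<le> \<epsilon> * (1 + \<rho>)" using \<rho> by linarith
  then have "1 / \<epsilon> \<le> (1 + \<rho>) / (1 - \<rho>)" using \<epsilon> \<rho> by (simp add: divide_simps mult.commute)
  then show ?thesis using \<epsilon> \<rho> unfolding hyp_dist_def \<rho>_def[symmetric]
    by (subst ln_le_cancel_iff) auto
qed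

text \<open>The core estimate: a continuum containing two points at hyperbolic distance \<open>T\<close> has
  \<open>Cap(K) \<ge> T/20\<close>, witnessed by the uniform measure on \<open>[0,T]\<close> carried to \<open>K\<close> along a section
  of the hyperbolic distance from one of the points.\<close>
lemma green_cap_ge_hyp_dist:
  assumes K: "compact K" "connected K" "K \<subseteq> unit_disc" and p: "p \<in> K" and q: "q \<in> K"
    and T: "hyp_dist p q > 0"
  shows "ennreal (hyp_dist p q / 20) \<le> green_cap K"
proof -
  define T where "T = hyp_dist p q"
  have disc: "cmod z < 1" if "z \<in> K" for z using K(3) that by (auto simp: unit_disc_def)
  have cont: "continuous_on K (hyp_dist p)" by (rule hyp_dist_continuous[OF disc[OF p] K(3)])
  have "{0..T} \<subseteq> hyp_dist p ` K"
    using p q hyp_dist_self[of p] unfolding T_def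
    by (intro connected_contains_Icc connected_continuous_image cont K(2)) force+
  moreover obtain f where f: "f \<in> borel_measurable borel"
    and "\<And>t. t \<in> hyp_dist p ` K \<Longrightarrow> f t \<in> K \<and> hyp_dist p (f t) = t"
    using measurable_section[OF K(1) cont] by blast
  ultimately have f_into: "f t \<in> K" "hyp_dist p (f t) = t" if "t \<in> {0..T}" for t
    using that by auto
  have \<mu>: "uniform_pushforward T f \<in> prob_measures_on K"
    using T f K(1) f_into unfolding T_def
    by (intro uniform_pushforward_prob_measures_on compact_imp_closed)
  have kernel: "green (f t) (f u) \<le> log_coth_half (t - u)" if "t \<in> {0..T}" "u \<in> {0..T}" for t u
    using green_le_log_coth_half[OF disc[OF p] disc[OF f_into(1)] disc[OF f_into(1)]]
      f_into(2) that by metis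
  have "green_energy (uniform_pushforward T f) \<le> ennreal 20 / ennreal T"
    unfolding green_energy_def using T kernel log_coth_half_integral unfolding T_def
    by (intro energy_uniform_pushforward[OF green_measurable _ f log_coth_half_measurable]) auto
  from green_cap_ge_of_energy[OF \<mu> this] show ?thesis using T by (simp add: T_def)
qed

theorem theorem3p12:
  shows "\<exists>c::real. c > 0 \<and>
    (\<forall>K \<epsilon>::real. compact K \<and> connected K \<and> K \<subseteq> unit_disc \<and> 0 < \<epsilon> \<and> \<epsilon> < 1 \<and>
        diam_rho K > 1 - \<epsilon> \<longrightarrow> green_cap K \<ge> ennreal (c * ln (1 / \<epsilon>)))"
proof (intro exI[of _ "1/20"] conjI allI impI)
  fix K and \<epsilon> :: real
  assume "compact K \<and> connected K \<and> K \<subseteq> unit_disc \<and> 0 < \<epsilon> \<and> \<epsilon> < 1 \<and> diam_rho K > 1 - \<epsilon>"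
  then have K: "compact K" "connected K" "K \<subseteq> unit_disc" and \<epsilon>: "0 < \<epsilon>" "\<epsilon> < 1"
    and diam: "diam_rho K > 1 - \<epsilon>" by auto
  obtain p q where pq: "p \<in> K" "q \<in> K" "1 - \<epsilon> < pseudo_hyp p q"
    using diam_rho_witness[OF K(3) _ diam] \<epsilon> by auto
  have "cmod p < 1" "cmod q < 1" using K(3) pq by (auto simp: unit_disc_def)
  from hyp_dist_ge_ln[OF this \<epsilon>(1) pq(3)]
  have far: "ln (1 / \<epsilon>) \<le> hyp_dist p q" .
  moreover have "0 < ln (1 / \<epsilon>)" using \<epsilon> by (intro ln_gt_zero) simp
  ultimately have "ennreal (hyp_dist p q / 20) \<le> green_cap K"
    by (intro green_cap_ge_hyp_dist[OF K pq(1,2)]) linarith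
  moreover have "ennreal (1/20 * ln (1 / \<epsilon>)) \<le> ennreal (hyp_dist p q / 20)"
    using far by (intro ennreal_leI) simp
  ultimately show "ennreal (1/20 * ln (1 / \<epsilon>)) \<le> green_cap K" by simp
qed simp

end
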